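(* Let $q\ge 4$ be a power of $2$. Then there exist a linear AOA$(1,q-1,q+2,q)$ and a linear AOA$(3,q-1,q+2,q)$.
   Context: An orthogonal array OA$(t,k,v)$ (with $1\le t\le k$) is a $v^t\times k$ array with entries from a set $X$ of size $v$ such that, for every choice of $t$ of its columns, each $t$-tuple in $X^t$ appears exactly once as a row of the corresponding $v^t\times t$ subarray. For integers $1\le s\le t\le k$, an augmented orthogonal array AOA$(s,t,k,v)$ is a $v^t\times(k+1)$ array $A$ such that: (1) the first $k$ columns of $A$ form an OA$(t,k,v)$ on a symbol set $X$ of size $v$; (2) the last column of $A$ has entries from a set $Y$ of size $v^{t-s}$; (3) for any choice of $s$ of the first $k$ columns, these $s$ columns together with the last column contain every $(s+1)$-tuple of $X^s\times Y$ exactly once as a row. For a prime power $q$, an AOA$(s,t,k,q)$ is linear if $X=\mathbb{F}_q$, $Y=\mathbb{F}_q^{t-s}$, and its set of rows, regarded as vectors in $\mathbb{F}_q^{k}\times\mathbb{F}_q^{t-s}=\mathbb{F}_q^{k+t-s}$, is an $\mathbb{F}_q$-linear subspace. (When $q=4$, the second array is an AOA$(3,3,6,4)$, i.e. the case $s=t$.) *)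

theory Defs
  imports Main
begin

text \<open>An array is a list of rows.  A row of an OA(t,k,v) is a function
  nat => 'x whose values at columns 0..<k are the entries (other values are
  irrelevant).\<close>

definition OA :: "nat \<Rightarrow> nat \<Rightarrow> 'x set \<Rightarrow> (nat \<Rightarrow> 'x) list \<Rightarrow> bool" where
  "OA t k X A \<longleftrightarrow>
     1 \<le> t \<and> t \<le> k \<and> finite X \<and>
     length A = card X ^ t \<and>
     (\<forall>r\<in>set A. \<forall>i<k. r i \<in> X) \<and>
     (\<forall>S. S \<subseteq> {0..<k} \<longrightarrow> card S = t \<longrightarrow>
        (\<forall>f. (\<forall>i\<in>S. f i \<in> X) \<longrightarrow>
           length (filter (\<lambda>r. \<forall>i\<in>S. r i = f i) A) = 1))"

text \<open>Augmented orthogonal array AOA(s,t,k,v) with v = card X: rows are pairs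
  (entries of the first k columns, entry of the last column).\<close>

definition AOA :: "nat \<Rightarrow> nat \<Rightarrow> nat \<Rightarrow> 'x set \<Rightarrow> 'y set \<Rightarrow> ((nat \<Rightarrow> 'x) \<times> 'y) list \<Rightarrow> bool" where
  "AOA s t k X Y A \<longleftrightarrow>
     1 \<le> s \<and> s \<le> t \<and> t \<le> k \<and>
     OA t k X (map fst A) \<and>
     finite Y \<and> card Y = card X ^ (t - s) \<and>
     (\<forall>r\<in>set A. snd r \<in> Y) \<and>
     (\<forall>S. S \<subseteq> {0..<k} \<longrightarrow> card S = s \<longrightarrow>
        (\<forall>f y. (\<forall>i\<in>S. f i \<in> X) \<longrightarrow> y \<in> Y \<longrightarrow>
           length (filter (\<lambda>r. (\<forall>i\<in>S. fst r i = f i) \<and> snd r = y) A) = 1))"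

text \<open>F_q^n represented as functions nat => 'a vanishing outside {0..<n}.\<close>

definition fvec :: "nat \<Rightarrow> (nat \<Rightarrow> 'a::zero) set" where
  "fvec n = {y. \<forall>j\<ge>n. y j = 0}"

definition row_vec :: "nat \<Rightarrow> (nat \<Rightarrow> 'a) \<times> (nat \<Rightarrow> 'a) \<Rightarrow> nat \<Rightarrow> 'a" where
  "row_vec k r = (\<lambda>i. if i < k then fst r i else snd r (i - k))"

definition linear_AOA :: "nat \<Rightarrow> nat \<Rightarrow> nat \<Rightarrow> ((nat \<Rightarrow> 'a::{finite,field}) \<times> (nat \<Rightarrow> 'a)) list \<Rightarrow> bool" where
  "linear_AOA s t k A \<longleftrightarrow>
     AOA s t k (UNIV :: 'a set) (fvec (t - s)) A \<and>
     (let V = row_vec k ` set A in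
        (\<lambda>i. 0) \<in> V \<and>
        (\<forall>u\<in>V. \<forall>w\<in>V. (\<lambda>i. u i + w i) \<in> V) \<and>
        (\<forall>c. \<forall>u\<in>V. (\<lambda>i. c * u i) \<in> V))"

end

theory Submission
  imports Defs "HOL-Library.FuncSet" "HOL-Computational_Algebra.Polynomial"
    "HOL-Computational_Algebra.Primes"
begin

text \<open>
  Both arrays consist of the codewords of one linear code over the field with \<open>q\<close> elements:
  a message \<open>m\<close> of \<open>q - 1\<close> coefficients is sent to the values of the polynomial
  \<open>f x = (\<Sum>i<q - 1. m i * x ^ i)\<close> at all \<open>q\<close> field elements, followed by the two top
  coefficients \<open>m (q - 2)\<close> and \<open>m (q - 3)\<close>. By linearity every counting condition of an
  (augmented) orthogonal array becomes a kernel statement: a message vanishing on enough columns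
  (and on the augmenting coordinates) is zero. For \<open>q - 1\<close> columns this is the MDS property
  of the code; its only delicate case, \<open>f\<close> of degree \<open>q - 2\<close> with \<open>q - 2\<close> roots and
  \<open>m (q - 3) = 0\<close>, is excluded in characteristic 2 by the power sums \<open>\<Sum>x. x ^ j\<close>, which
  vanish unless \<open>j = q - 1\<close>. The augmenting column for \<open>s = 3\<close> records the middle
  coefficients; once they vanish, \<open>x\<^sup>2 * f x\<close> is a quadratic for \<open>x \<noteq> 0\<close>, killed by three
  zero columns. For \<open>s = 1\<close> it moreover makes \<open>(m 0, m (q - 3), m (q - 2))\<close> proportional to
  \<open>(\<beta>, 1, 1)\<close> with \<open>\<beta>\<close> not of the form \<open>y\<^sup>2 + y\<close>, so that \<open>\<beta> x\<^sup>2 + x + 1\<close> has no root.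
\<close>

section \<open>Linear augmented orthogonal arrays from a generator\<close>

lemma bij_betw_restrict_fvec:
  "bij_betw (\<lambda>m. restrict m {0..<n}) (fvec n :: (nat \<Rightarrow> 'a::zero) set) (PiE {0..<n} (\<lambda>_. UNIV))"
proof (rule bij_betwI')
  fix x y :: "nat \<Rightarrow> 'a"
  assume "x \<in> fvec n" "y \<in> fvec n"
  show "(restrict x {0..<n} = restrict y {0..<n}) = (x = y)"
  proof
    assume eq: "restrict x {0..<n} = restrict y {0..<n}"
    show "x = y"
    proof
      fix i
      show "x i = y i"
        using fun_cong[OF eq, of i] \<open>x \<in> fvec n\<close> \<open>y \<in> fvec n\<close>
        by (cases "i < n") (auto simp: fvec_def)
    qed
  qed simp
next
  fix g :: "nat \<Rightarrow> 'a"
  assume "g \<in> PiE {0..<n} (\<lambda>_. UNIV)"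
  then show "\<exists>x\<in>fvec n. g = restrict x {0..<n}"
    by (intro bexI[of _ "\<lambda>i. if i < n then g i else 0"])
       (auto simp: fvec_def fun_eq_iff PiE_def extensional_def)
qed auto

lemma finite_fvec: "finite (fvec n :: (nat \<Rightarrow> 'a::{zero,finite}) set)"
proof -
  have "finite (PiE {0..<n} (\<lambda>_. UNIV :: 'a set))"
    by (rule finite_PiE) auto
  then show ?thesis
    using bij_betw_finite[OF bij_betw_restrict_fvec] by blast
qed

lemma card_fvec: "card (fvec n :: (nat \<Rightarrow> 'a::{zero,finite}) set) = card (UNIV :: 'a set) ^ n"
  using bij_betw_same_card[OF bij_betw_restrict_fvec[of n, where 'a='a]] by (simp add: card_PiE)

definition pointwise_linear :: "((nat \<Rightarrow> 'a::field) \<Rightarrow> nat \<Rightarrow> 'a) \<Rightarrow> bool" where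
  "pointwise_linear L \<longleftrightarrow>
     (\<forall>u v. L (\<lambda>j. u j + v j) = (\<lambda>i. L u i + L v i)) \<and>
     (\<forall>c u. L (\<lambda>j. c * u j) = (\<lambda>i. c * L u i))"

lemma pointwise_linear_diff:
  assumes "pointwise_linear L"
  shows "L (\<lambda>j. u j - v j) = (\<lambda>i. L u i - L v i)"
proof -
  have "L (\<lambda>j. u j - v j) = L (\<lambda>j. u j + (\<lambda>j. (-1) * v j) j)"
    by simp
  also have "\<dots> = (\<lambda>i. L u i + L (\<lambda>j. (-1) * v j) i)"
    using assms by (simp only: pointwise_linear_def)
  also have "L (\<lambda>j. (-1) * v j) = (\<lambda>i. (-1) * L v i)"
    using assms unfolding pointwise_linear_def by blast
  also have "(\<lambda>i. L u i + (\<lambda>i. (-1) * L v i) i) = (\<lambda>i. L u i - L v i)"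
    by simp
  finally show ?thesis .
qed

lemma pointwise_linear_zero:
  assumes "pointwise_linear L"
  shows "L (\<lambda>_. 0) = (\<lambda>_. 0)"
proof -
  have "\<And>c u. L (\<lambda>j. c * u j) = (\<lambda>i. c * L u i)"
    using assms by (simp add: pointwise_linear_def)
  from this[of 0 "\<lambda>_. 0"] show ?thesis
    by simp
qed

lemma pointwise_linear_row_vec:
  assumes "pointwise_linear G" "pointwise_linear E"
  shows "pointwise_linear (\<lambda>m. row_vec k (G m, E m))"
  using assms unfolding pointwise_linear_def row_vec_def by (simp add: fun_eq_iff)

lemma length_filter_eq_1_if_bij:
  assumes "distinct L" "inj_on \<Phi> (set L)" "\<Phi> ` set L \<subseteq> T" "finite T" "card T = length L"
    and "z \<in> T"
  shows "length (filter (\<lambda>m. \<Phi> m = z) L) = 1"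
proof -
  have "card (\<Phi> ` set L) = card T"
    using assms(1,2,5) by (simp add: card_image distinct_card)
  then have "\<Phi> ` set L = T"
    using assms(3,4) card_subset_eq by metis
  then obtain m0 where "m0 \<in> set L" "\<Phi> m0 = z"
    using assms(6) by blast
  then have "{m. \<Phi> m = z} \<inter> set L = {m0}"
    using assms(2) by (auto simp: inj_on_def)
  then show ?thesis
    using assms(1) by (simp add: distinct_length_filter)
qed

lemma restrict_eq_restrict_iff: "restrict f S = restrict g S \<longleftrightarrow> (\<forall>i\<in>S. f i = g i)"
  by (auto simp: restrict_def fun_eq_iff)

lemma OA_generated:
  fixes G :: "(nat \<Rightarrow> 'a::{finite,field}) \<Rightarrow> nat \<Rightarrow> 'a"
  assumes "1 \<le> t" "t \<le> k" "pointwise_linear G" "distinct L" "set L = fvec t"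
    and kernel: "\<And>m S. m \<in> fvec t \<Longrightarrow> S \<subseteq> {0..<k} \<Longrightarrow> card S = t \<Longrightarrow>
      \<forall>i\<in>S. G m i = 0 \<Longrightarrow> m = (\<lambda>_. 0)"
  shows "OA t k (UNIV :: 'a set) (map G L)"
  unfolding OA_def
proof (intro conjI allI impI)
  have card_L: "length L = card (UNIV :: 'a set) ^ t"
    using assms(4,5) card_fvec distinct_card by metis
  then show "length (map G L) = card (UNIV :: 'a set) ^ t"
    by simp
  fix S and f :: "nat \<Rightarrow> 'a"
  assume S: "S \<subseteq> {0..<k}" "card S = t"
  then have "finite S"
    using finite_subset by blast
  have "length (filter (\<lambda>m. restrict (G m) S = restrict f S) L) = 1"
  proof (rule length_filter_eq_1_if_bij)
    show "inj_on (\<lambda>m. restrict (G m) S) (set L)"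
    proof (rule inj_onI)
      fix u v
      assume uv: "u \<in> set L" "v \<in> set L" and eq: "restrict (G u) S = restrict (G v) S"
      have "(\<lambda>j. u j - v j) \<in> fvec t"
        using uv assms(5) by (simp add: fvec_def)
      moreover have "\<forall>i\<in>S. G (\<lambda>j. u j - v j) i = 0"
        using eq by (simp add: pointwise_linear_diff[OF assms(3)] restrict_eq_restrict_iff)
      ultimately have "(\<lambda>j. u j - v j) = (\<lambda>_. 0)"
        using kernel S by blast
      then show "u = v"
        by (simp add: fun_eq_iff)
    qed
    show "finite (PiE S (\<lambda>_. UNIV :: 'a set))"
      by (rule finite_PiE) (use \<open>finite S\<close> in auto)
    show "card (PiE S (\<lambda>_. UNIV :: 'a set)) = length L"
      using S card_L \<open>finite S\<close> by (simp add: card_PiE)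
  qed (use assms(4) in auto)
  then show "length (filter (\<lambda>r. \<forall>i\<in>S. r i = f i) (map G L)) = 1"
    by (simp add: filter_map o_def restrict_eq_restrict_iff)
qed (use assms in auto)

lemma AOA_generated:
  fixes G E :: "(nat \<Rightarrow> 'a::{finite,field}) \<Rightarrow> nat \<Rightarrow> 'a"
  assumes "1 \<le> s" "s \<le> t" "t \<le> k" "pointwise_linear G" "pointwise_linear E"
    and "distinct L" "set L = fvec t"
    and E_fvec: "\<And>m. m \<in> fvec t \<Longrightarrow> E m \<in> fvec (t - s)"
    and OA_kernel: "\<And>m S. m \<in> fvec t \<Longrightarrow> S \<subseteq> {0..<k} \<Longrightarrow> card S = t \<Longrightarrow>
      \<forall>i\<in>S. G m i = 0 \<Longrightarrow> m = (\<lambda>_. 0)"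
    and AOA_kernel: "\<And>m S. m \<in> fvec t \<Longrightarrow> S \<subseteq> {0..<k} \<Longrightarrow> card S = s \<Longrightarrow>
      \<forall>i\<in>S. G m i = 0 \<Longrightarrow> E m = (\<lambda>_. 0) \<Longrightarrow> m = (\<lambda>_. 0)"
  shows "AOA s t k (UNIV :: 'a set) (fvec (t - s)) (map (\<lambda>m. (G m, E m)) L)"
  unfolding AOA_def
proof (intro conjI allI impI)
  show "OA t k (UNIV :: 'a set) (map fst (map (\<lambda>m. (G m, E m)) L))"
    using OA_generated[of t k G L] assms by (simp add: o_def)
  fix S and f y :: "nat \<Rightarrow> 'a"
  assume S: "S \<subseteq> {0..<k}" "card S = s" and y: "y \<in> fvec (t - s)"
  then have "finite S"
    using finite_subset by blast
  let ?T = "PiE S (\<lambda>_. UNIV :: 'a set) \<times> (fvec (t - s) :: (nat \<Rightarrow> 'a) set)"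
  have "length (filter (\<lambda>m. (restrict (G m) S, E m) = (restrict f S, y)) L) = 1"
  proof (rule length_filter_eq_1_if_bij)
    show "inj_on (\<lambda>m. (restrict (G m) S, E m)) (set L)"
    proof (rule inj_onI)
      fix u v
      assume uv: "u \<in> set L" "v \<in> set L" and eq: "(restrict (G u) S, E u) = (restrict (G v) S, E v)"
      have "(\<lambda>j. u j - v j) \<in> fvec t"
        using uv assms(7) by (simp add: fvec_def)
      moreover have "\<forall>i\<in>S. G (\<lambda>j. u j - v j) i = 0"
        using eq by (simp add: pointwise_linear_diff[OF assms(4)] restrict_eq_restrict_iff)
      moreover have "E (\<lambda>j. u j - v j) = (\<lambda>_. 0)"
        using eq by (simp add: pointwise_linear_diff[OF assms(5)])
      ultimately have "(\<lambda>j. u j - v j) = (\<lambda>_. 0)"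
        using AOA_kernel S by blast
      then show "u = v"
        by (simp add: fun_eq_iff)
    qed
    show "finite ?T"
      using \<open>finite S\<close> finite_fvec by (intro finite_cartesian_product finite_PiE) auto
    have "card ?T = card (UNIV :: 'a set) ^ s * card (UNIV :: 'a set) ^ (t - s)"
      using S \<open>finite S\<close> by (simp add: card_cartesian_product card_PiE card_fvec)
    also have "\<dots> = length L"
      using assms(2,6,7) card_fvec distinct_card by (metis le_add_diff_inverse power_add)
    finally show "card ?T = length L" .
  qed (use assms(6,7) E_fvec y in auto)
  then show "length (filter (\<lambda>r. (\<forall>i\<in>S. fst r i = f i) \<and> snd r = y)
      (map (\<lambda>m. (G m, E m)) L)) = 1"
    by (simp add: filter_map o_def restrict_eq_restrict_iff)
next
  show "finite (fvec (t - s) :: (nat \<Rightarrow> 'a) set)"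
    by (rule finite_fvec)
  show "card (fvec (t - s) :: (nat \<Rightarrow> 'a) set) = card (UNIV :: 'a set) ^ (t - s)"
    by (rule card_fvec)
qed (use assms in auto)

lemma image_fvec_closed:
  assumes "pointwise_linear R"
  shows "(\<lambda>i. 0) \<in> R ` fvec n"
    and "\<forall>u\<in>R ` fvec n. \<forall>w\<in>R ` fvec n. (\<lambda>i. u i + w i) \<in> R ` fvec n"
    and "\<forall>c. \<forall>u\<in>R ` fvec n. (\<lambda>i. c * u i) \<in> R ` fvec n"
proof -
  have "(\<lambda>_. 0) \<in> fvec n"
    by (simp add: fvec_def)
  then show "(\<lambda>i. 0) \<in> R ` fvec n"
    using pointwise_linear_zero[OF assms] by (metis image_eqI)
  show "\<forall>u\<in>R ` fvec n. \<forall>w\<in>R ` fvec n. (\<lambda>i. u i + w i) \<in> R ` fvec n"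
  proof (intro ballI)
    fix u w
    assume "u \<in> R ` fvec n" "w \<in> R ` fvec n"
    then obtain a b where "a \<in> fvec n" "b \<in> fvec n" "u = R a" "w = R b"
      by blast
    moreover have "R (\<lambda>j. a j + b j) = (\<lambda>i. R a i + R b i)"
      using assms by (simp add: pointwise_linear_def)
    moreover have "(\<lambda>j. a j + b j) \<in> fvec n"
      using \<open>a \<in> fvec n\<close> \<open>b \<in> fvec n\<close> by (simp add: fvec_def)
    ultimately show "(\<lambda>i. u i + w i) \<in> R ` fvec n"
      by (simp add: image_iff) (metis)
  qed
  show "\<forall>c. \<forall>u\<in>R ` fvec n. (\<lambda>i. c * u i) \<in> R ` fvec n"
  proof (intro allI ballI)
    fix c u
    assume "u \<in> R ` fvec n"
    then obtain a where "a \<in> fvec n" "u = R a"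
      by blast
    moreover have "R (\<lambda>j. c * a j) = (\<lambda>i. c * R a i)"
      using assms by (simp add: pointwise_linear_def)
    moreover have "(\<lambda>j. c * a j) \<in> fvec n"
      using \<open>a \<in> fvec n\<close> by (simp add: fvec_def)
    ultimately show "(\<lambda>i. c * u i) \<in> R ` fvec n"
      by (simp add: image_iff) (metis)
  qed
qed

lemma linear_AOA_generated:
  fixes G E :: "(nat \<Rightarrow> 'a::{finite,field}) \<Rightarrow> nat \<Rightarrow> 'a"
  assumes "1 \<le> s" "s \<le> t" "t \<le> k" "pointwise_linear G" "pointwise_linear E"
    and "\<And>m. m \<in> fvec t \<Longrightarrow> E m \<in> fvec (t - s)"
    and "\<And>m S. m \<in> fvec t \<Longrightarrow> S \<subseteq> {0..<k} \<Longrightarrow> card S = t \<Longrightarrow>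
      \<forall>i\<in>S. G m i = 0 \<Longrightarrow> m = (\<lambda>_. 0)"
    and "\<And>m S. m \<in> fvec t \<Longrightarrow> S \<subseteq> {0..<k} \<Longrightarrow> card S = s \<Longrightarrow>
      \<forall>i\<in>S. G m i = 0 \<Longrightarrow> E m = (\<lambda>_. 0) \<Longrightarrow> m = (\<lambda>_. 0)"
  shows "\<exists>A :: ((nat \<Rightarrow> 'a) \<times> (nat \<Rightarrow> 'a)) list. linear_AOA s t k A"
proof -
  obtain L :: "(nat \<Rightarrow> 'a) list" where L: "distinct L" "set L = fvec t"
    using finite_distinct_list[OF finite_fvec] by blast
  let ?A = "map (\<lambda>m. (G m, E m)) L"
  have "row_vec k ` set ?A = (\<lambda>m. row_vec k (G m, E m)) ` fvec t"
    by (simp add: L(2) image_image)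
  moreover have "AOA s t k UNIV (fvec (t - s)) ?A"
    by (rule AOA_generated) (use assms L in auto)
  moreover note image_fvec_closed[OF pointwise_linear_row_vec[OF assms(4,5)], of k t]
  ultimately have "linear_AOA s t k ?A"
    unfolding linear_AOA_def Let_def by (simp only:)
  then show ?thesis
    by blast
qed

section \<open>Finite fields\<close>

lemma of_nat_card_UNIV_eq_0: "of_nat (card (UNIV :: 'a::{finite,ring_1} set)) = (0::'a)"
proof -
  have "(\<Sum>x::'a\<in>UNIV. x + 1) = (\<Sum>x\<in>UNIV. x)"
    by (rule sum.reindex_bij_witness[of _ "\<lambda>x. x - 1" "\<lambda>x. x + 1"]) auto
  then show ?thesis
    by (simp add: sum.distrib)
qed

lemma CHAR_eq_2_if_card_power_of_2:
  assumes "card (UNIV :: 'a::{finite,field} set) = 2 ^ m"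
  shows "CHAR('a) = 2"
proof -
  have "prime CHAR('a)"
    by (intro prime_CHAR_semidom finite_imp_CHAR_pos) simp
  have "CHAR('a) dvd card (UNIV :: 'a set)"
    using of_nat_card_UNIV_eq_0[where 'a='a] of_nat_eq_0_iff_char_dvd by blast
  then have "CHAR('a) dvd 2"
    using assms prime_dvd_power \<open>prime CHAR('a)\<close> by metis
  then show ?thesis
    using \<open>prime CHAR('a)\<close> primes_dvd_imp_eq two_is_prime_nat by blast
qed

lemma power2_eq_iff_CHAR_2:
  fixes x y :: "'a::field"
  assumes "CHAR('a) = 2"
  shows "x ^ 2 = y ^ 2 \<longleftrightarrow> x = y"
proof
  assume "x ^ 2 = y ^ 2"
  then have "(x - y) * (x + y) = 0"
    by (simp add: algebra_simps power2_eq_square)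
  moreover have "x + y = x - y"
    using minus_CHAR_2[OF assms] by simp
  ultimately show "x = y"
    by simp
qed simp

lemma ex_not_square_plus_self:
  "\<exists>\<beta>::'a::{finite,field}. \<forall>y. y ^ 2 + y \<noteq> \<beta>"
proof -
  define f where "f = (\<lambda>y::'a. y ^ 2 + y)"
  have "\<not> inj f"
  proof
    assume "inj f"
    moreover have "f (-1) = f 0"
      by (simp add: f_def)
    ultimately have "(-1::'a) = 0"
      by (rule injD)
    then show False
      by simp
  qed
  then have "\<not> surj f"
    using finite_UNIV_surj_inj[OF finite_UNIV] by blast
  then show ?thesis
    by (auto simp: f_def surj_def) (metis)
qed

lemma power_card_minus_1_eq_1:
  fixes x :: "'a::{finite,field}"
  assumes "x \<noteq> 0"
  shows "x ^ (card (UNIV :: 'a set) - 1) = 1"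
proof -
  let ?U = "UNIV - {0::'a}"
  have "prod (\<lambda>y. x * y) ?U = prod (\<lambda>y. y) ?U"
    by (rule prod.reindex_bij_witness[of _ "\<lambda>y. y / x" "\<lambda>y. x * y"]) (use assms in auto)
  then have "prod (\<lambda>y. y) ?U = prod (\<lambda>y. x * y) ?U"
    by simp
  also have "\<dots> = x ^ (card (UNIV :: 'a set) - 1) * prod (\<lambda>y. y) ?U"
    by (simp add: prod.distrib card_Diff_subset)
  finally show ?thesis
    by simp
qed

lemma power_card_eq_self:
  fixes x :: "'a::{finite,field}"
  shows "x ^ card (UNIV :: 'a set) = x"
proof (cases "x = 0")
  case False
  have "card (UNIV :: 'a set) = Suc (card (UNIV :: 'a set) - 1)"
    using finite_UNIV_card_ge_0[where 'a='a] by simp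
  then show ?thesis
    using power_card_minus_1_eq_1[OF False] by (metis mult.right_neutral power_Suc)
qed (simp add: finite_UNIV_card_ge_0)

lemma sum_UNIV_power_eq_0:
  assumes "1 \<le> n" "n < card (UNIV :: 'a::{finite,field} set) - 1"
  shows "(\<Sum>x::'a\<in>UNIV. x ^ n) = 0"
proof -
  have "\<exists>c::'a. c \<noteq> 0 \<and> c ^ n \<noteq> 1"
  proof (rule ccontr)
    assume no_c: "\<not> ?thesis"
    define p :: "'a poly" where "p = monom 1 n - 1"
    have "poly p 0 \<noteq> 0"
      using assms(1) by (simp add: p_def poly_monom power_0_left)
    then have "p \<noteq> 0"
      by auto
    have "UNIV - {0} \<subseteq> {x. poly p x = 0}"
      using no_c by (auto simp: p_def poly_monom)
    then have "card (UNIV - {0::'a}) \<le> card {x. poly p x = 0}"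
      by (intro card_mono poly_roots_finite \<open>p \<noteq> 0\<close>)
    also have "\<dots> \<le> degree p"
      by (rule card_poly_roots_bound[OF \<open>p \<noteq> 0\<close>])
    also have "\<dots> \<le> n"
      by (simp add: p_def degree_diff_le degree_monom_le)
    finally show False
      using assms(2) by (simp add: card_Diff_subset)
  qed
  then obtain c :: 'a where c: "c \<noteq> 0" "c ^ n \<noteq> 1"
    by blast
  have "(\<Sum>x\<in>UNIV. (c * x) ^ n) = (\<Sum>x::'a\<in>UNIV. x ^ n)"
    by (rule sum.reindex_bij_witness[of _ "\<lambda>y. y / c" "\<lambda>y. c * y"]) (use c in auto)
  moreover have "(\<Sum>x\<in>UNIV. (c * x) ^ n) = c ^ n * (\<Sum>x::'a\<in>UNIV. x ^ n)"
    by (simp add: power_mult_distrib sum_distrib_left)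
  ultimately have "(c ^ n - 1) * (\<Sum>x::'a\<in>UNIV. x ^ n) = 0"
    by (simp add: left_diff_distrib)
  then show ?thesis
    using c by simp
qed

lemma sum_UNIV_power:
  assumes "n \<le> card (UNIV :: 'a::{finite,field} set)" "3 \<le> card (UNIV :: 'a set)"
  shows "(\<Sum>x::'a\<in>UNIV. x ^ n) = (if n = card (UNIV :: 'a set) - 1 then -1 else 0)"
proof -
  let ?q = "card (UNIV :: 'a set)"
  have sum_1: "(\<Sum>x::'a\<in>UNIV. x ^ 1) = 0"
    using sum_UNIV_power_eq_0[of 1, where 'a='a] assms(2) by simp
  consider "n = 0" | "1 \<le> n \<and> n < ?q - 1" | "n = ?q - 1" | "n = ?q"
    using assms(1) by linarith
  then show ?thesis
  proof cases
    case 1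
    have "of_nat ?q = (0::'a)"
      by (rule of_nat_card_UNIV_eq_0)
    then show ?thesis
      using 1 assms(2) by simp
  next
    case 2
    then show ?thesis
      using sum_UNIV_power_eq_0 by auto
  next
    case 3
    have "(\<Sum>x::'a\<in>UNIV. x ^ n) = 0 ^ n + (\<Sum>x\<in>UNIV - {0}. x ^ n)"
      by (simp add: sum.remove[of UNIV 0])
    also have "(\<Sum>x::'a\<in>UNIV - {0}. x ^ n) = (\<Sum>x::'a\<in>UNIV - {0}. 1)"
      by (intro sum.cong) (use 3 power_card_minus_1_eq_1[where 'a='a] in auto)
    also have "\<dots> = of_nat ?q - 1"
      using assms(2) by (simp add: card_Diff_subset of_nat_diff)
    also have "of_nat ?q = (0::'a)"
      by (rule of_nat_card_UNIV_eq_0)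
    finally show ?thesis
      using 3 assms(2) by simp
  next
    case 4
    then show ?thesis
      using sum_1 assms(2) by (simp add: power_card_eq_self)
  qed
qed

section \<open>Polynomials given by coefficient functions\<close>

definition eval_coeffs :: "nat \<Rightarrow> (nat \<Rightarrow> 'a::comm_semiring_1) \<Rightarrow> 'a \<Rightarrow> 'a" where
  "eval_coeffs n m x = (\<Sum>i<n. m i * x ^ i)"

lemma eval_coeffs_truncate:
  assumes "n \<le> N" "\<forall>i\<ge>n. m i = 0"
  shows "eval_coeffs N m x = eval_coeffs n m x"
  unfolding eval_coeffs_def by (rule sum.mono_neutral_right) (use assms in auto)

lemma coeffs_eq_0_if_card_roots_ge:
  fixes m :: "nat \<Rightarrow> 'a::idom"
  assumes "\<forall>i\<ge>n. m i = 0" "n \<le> N" "n \<le> card {x. eval_coeffs N m x = 0}"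
  shows "m = (\<lambda>_. 0)"
proof -
  define p where "p = (\<Sum>i<n. monom (m i) i)"
  have coeff_p: "coeff p i = m i" for i
    using assms(1) by (cases "i < n") (simp_all add: p_def coeff_sum)
  have "poly p x = eval_coeffs N m x" for x
    using eval_coeffs_truncate[OF assms(2,1)]
    by (simp add: p_def poly_sum poly_monom eval_coeffs_def)
  then have roots: "{x. eval_coeffs N m x = 0} = {x. poly p x = 0}"
    by simp
  have "p = 0"
  proof (rule ccontr)
    assume "p \<noteq> 0"
    then have "m (degree p) \<noteq> 0"
      using coeff_p by (metis leading_coeff_0_iff)
    then have "degree p < n"
      using assms(1) not_le by blast
    moreover have "card {x. poly p x = 0} \<le> degree p"
      by (rule card_poly_roots_bound[OF \<open>p \<noteq> 0\<close>])
    ultimately show False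
      using assms(3) roots by simp
  qed
  then show ?thesis
    using coeff_p by (simp add: fun_eq_iff flip: coeff_p)
qed

text \<open>A vanishing leading or linear coefficient counts as an extra root; this is
  where characteristic 2 enters: \<open>c x\<^sup>2 + b\<close> has at most one root.\<close>

lemma quadratic_eq_0_if_CHAR_2:
  fixes a b c :: "'a::field"
  assumes "CHAR('a) = 2"
    and "3 \<le> card {x. c * x ^ 2 + a * x + b = 0} + of_bool (c = 0) + of_bool (a = 0)"
  shows "a = 0 \<and> b = 0 \<and> c = 0"
proof (rule ccontr)
  assume nonzero: "\<not> ?thesis"
  define p where "p = [:b, a, c:]"
  let ?R = "{x. c * x ^ 2 + a * x + b = 0}"
  have "p \<noteq> 0"
    using nonzero by (simp add: p_def)
  have "poly p x = c * x ^ 2 + a * x + b" for x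
    by (simp add: p_def algebra_simps power2_eq_square)
  then have R: "?R = {x. poly p x = 0}"
    by simp
  have "finite ?R"
    unfolding R by (rule poly_roots_finite[OF \<open>p \<noteq> 0\<close>])
  have card_R: "card ?R \<le> degree p"
    unfolding R by (rule card_poly_roots_bound[OF \<open>p \<noteq> 0\<close>])
  show False
  proof (cases "c \<noteq> 0 \<and> a = 0")
    case True
    have unique: "x = y" if "x \<in> ?R" "y \<in> ?R" for x y
    proof -
      have "c * x ^ 2 + b = c * y ^ 2 + b"
        using that True by simp
      then have "x ^ 2 = y ^ 2"
        using True by simp
      then show "x = y"
        using power2_eq_iff_CHAR_2[OF assms(1)] by blast
    qed
    have "card ?R \<le> 1"
      unfolding One_nat_def card_le_Suc0_iff_eq[OF \<open>finite ?R\<close>] using unique by blast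
    then show False
      using assms(2) True by simp
  next
    case False
    then have "degree p + of_bool (c = 0) + of_bool (a = 0) \<le> 2"
      by (cases "c = 0"; cases "a = 0") (simp_all add: p_def)
    then show False
      using assms(2) card_R by linarith
  qed
qed

section \<open>The extended Reed--Solomon code\<close>

definition ext_RS :: "nat \<Rightarrow> (nat \<Rightarrow> 'a) \<Rightarrow> (nat \<Rightarrow> 'a::field) \<Rightarrow> nat \<Rightarrow> 'a" where
  "ext_RS q e m i =
     (if i < q then eval_coeffs (q - 1) m (e i) else if i = q then m (q - 2) else m (q - 3))"

definition aug_col3 :: "nat \<Rightarrow> (nat \<Rightarrow> 'a::field) \<Rightarrow> nat \<Rightarrow> 'a" where
  "aug_col3 q m j = (if j < q - 4 then m (j + 1) else 0)"

definition aug_col1 :: "nat \<Rightarrow> 'a \<Rightarrow> (nat \<Rightarrow> 'a::field) \<Rightarrow> nat \<Rightarrow> 'a" where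
  "aug_col1 q \<beta> m =
     (aug_col3 q m)(q - 4 := m (q - 2) - m (q - 3), q - 3 := m 0 - \<beta> * m (q - 2))"

lemma pointwise_linear_ext_RS: "pointwise_linear (ext_RS q e)"
  by (simp add: pointwise_linear_def ext_RS_def eval_coeffs_def fun_eq_iff
      sum.distrib sum_distrib_left algebra_simps)

lemma pointwise_linear_aug_col3: "pointwise_linear (aug_col3 q)"
  by (simp add: pointwise_linear_def aug_col3_def fun_eq_iff)

lemma pointwise_linear_aug_col1: "pointwise_linear (aug_col1 q \<beta>)"
  by (simp add: pointwise_linear_def aug_col1_def aug_col3_def fun_eq_iff algebra_simps)

lemma aug_col3_fvec: "aug_col3 q m \<in> fvec (q - 1 - 3)"
  by (simp add: aug_col3_def fvec_def)

lemma aug_col1_fvec: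
  assumes "4 \<le> q"
  shows "aug_col1 q \<beta> m \<in> fvec (q - 1 - 1)"
  using assms by (auto simp: aug_col1_def aug_col3_def fvec_def)

lemma aug_col3_eq_0_iff:
  "aug_col3 q m = (\<lambda>_. 0) \<longleftrightarrow> (\<forall>j. 1 \<le> j \<and> j < q - 3 \<longrightarrow> m j = 0)"
proof -
  have "aug_col3 q m = (\<lambda>_. 0) \<longleftrightarrow> (\<forall>j < q - 4. m (j + 1) = 0)"
    by (auto simp: aug_col3_def fun_eq_iff)
  also have "\<dots> \<longleftrightarrow> (\<forall>j. 1 \<le> j \<and> j < q - 3 \<longrightarrow> m j = 0)"
  proof (intro iffI allI impI)
    fix j
    assume "\<forall>j < q - 4. m (j + 1) = 0" "1 \<le> j \<and> j < q - 3"
    moreover have "j - 1 < q - 4" "j - 1 + 1 = j"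
      using \<open>1 \<le> j \<and> j < q - 3\<close> by auto
    ultimately show "m j = 0"
      by metis
  qed auto
  finally show ?thesis .
qed

lemma aug_col1_eq_0D:
  assumes "4 \<le> q" "aug_col1 q \<beta> m = (\<lambda>_. 0)"
  shows "\<forall>j. 1 \<le> j \<and> j < q - 3 \<longrightarrow> m j = 0"
    and "m (q - 3) = m (q - 2)"
    and "m 0 = \<beta> * m (q - 2)"
proof -
  have "aug_col3 q m j = 0" if "j < q - 4" for j
  proof -
    have "j \<noteq> q - 4" "j \<noteq> q - 3"
      using that by auto
    then show ?thesis
      using fun_cong[OF assms(2), of j] by (simp add: aug_col1_def)
  qed
  then have "aug_col3 q m = (\<lambda>_. 0)"
    by (auto simp: aug_col3_def)
  then show "\<forall>j. 1 \<le> j \<and> j < q - 3 \<longrightarrow> m j = 0"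
    by (simp add: aug_col3_eq_0_iff)
  have "q - 4 \<noteq> q - 3"
    using assms(1) by simp
  then show "m (q - 3) = m (q - 2)" "m 0 = \<beta> * m (q - 2)"
    using fun_cong[OF assms(2), of "q - 4"] fun_cong[OF assms(2), of "q - 3"]
    by (simp_all add: aug_col1_def)
qed

lemma eq_0_if_middle_and_ends_zero:
  assumes "m \<in> fvec (q - 1)" "\<forall>j. 1 \<le> j \<and> j < q - 3 \<longrightarrow> m j = 0"
    and "m 0 = 0" "m (q - 3) = 0" "m (q - 2) = 0"
  shows "m = (\<lambda>_. 0)"
proof
  fix j
  show "m j = 0"
  proof (cases "j < q - 1")
    case True
    then have "j = 0 \<or> (1 \<le> j \<and> j < q - 3) \<or> j = q - 3 \<or> j = q - 2"
      by linarith
    then show ?thesis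
      using assms(2-5) by blast
  qed (use assms(1) in \<open>simp add: fvec_def\<close>)
qed

lemma card_zero_cols_ext_RS:
  assumes "bij_betw e {0..<q} (UNIV :: 'a::field set)" "S \<subseteq> {0..<q + 2}"
    and "\<forall>i\<in>S. ext_RS q e m i = 0"
  shows "card S \<le> card {x. eval_coeffs (q - 1) m x = 0}
    + of_bool (m (q - 2) = 0) + of_bool (m (q - 3) = 0)"
proof -
  have "finite (UNIV :: 'a set)"
    using assms(1) bij_betw_finite by blast
  let ?A = "S \<inter> {0..<q}" and ?B = "S \<inter> {q}" and ?C = "S \<inter> {q + 1}"
  have "card S \<le> card (?A \<union> ?B \<union> ?C)"
    using assms(2) by (intro card_mono) auto
  also have "\<dots> \<le> card ?A + card ?B + card ?C"
    using card_Un_le[of "?A \<union> ?B" ?C] card_Un_le[of ?A ?B] by linarith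
  finally have "card S \<le> card ?A + card ?B + card ?C" .
  moreover have "card ?A \<le> card {x. eval_coeffs (q - 1) m x = 0}"
  proof -
    have inj: "inj_on e ?A"
      using inj_on_subset[OF bij_betw_imp_inj_on[OF assms(1)] Int_lower2] .
    have sub: "e ` ?A \<subseteq> {x. eval_coeffs (q - 1) m x = 0}"
      using assms(3) by (auto simp: ext_RS_def)
    have fin: "finite {x. eval_coeffs (q - 1) m x = 0}"
      using \<open>finite (UNIV :: 'a set)\<close> by (rule finite_subset[OF subset_UNIV])
    show ?thesis
      using card_mono[OF fin sub] card_image[OF inj] by simp
  qed
  moreover have "card ?B \<le> of_bool (m (q - 2) = 0)"
    using assms(3) by (cases "q \<in> S") (auto simp: ext_RS_def)
  moreover have "card ?C \<le> of_bool (m (q - 3) = 0)"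
    using assms(3) by (cases "q + 1 \<in> S") (auto simp: ext_RS_def)
  ultimately show ?thesis
    by linarith
qed

lemma card_eq_card_Diff_singleton_plus:
  assumes "finite A"
  shows "card A = card (A - {x}) + of_bool (x \<in> A)"
  using card.remove[OF assms, of x] by (cases "x \<in> A") simp_all

lemma sum_power_times_eval_coeffs:
  "(\<Sum>x::'a::{finite,comm_semiring_1}\<in>UNIV. x ^ j * eval_coeffs n m x)
    = (\<Sum>i<n. m i * (\<Sum>x::'a\<in>UNIV. x ^ (i + j)))"
proof -
  have "(\<Sum>x::'a\<in>UNIV. x ^ j * eval_coeffs n m x) = (\<Sum>x::'a\<in>UNIV. \<Sum>i<n. m i * x ^ (i + j))"
    unfolding eval_coeffs_def by (simp add: sum_distrib_left power_add algebra_simps)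
  also have "\<dots> = (\<Sum>i<n. m i * (\<Sum>x::'a\<in>UNIV. x ^ (i + j)))"
    by (subst sum.swap) (simp add: sum_distrib_left)
  finally show ?thesis .
qed

context
  fixes q :: nat
  assumes card_UNIV: "card (UNIV :: 'a::{finite,field} set) = q"
    and q_ge_4: "4 \<le> q"
begin

lemma eval_coeffs_middle_zero:
  fixes m :: "nat \<Rightarrow> 'a"
  assumes "\<forall>j. 1 \<le> j \<and> j < q - 3 \<longrightarrow> m j = 0"
  shows "eval_coeffs (q - 1) m x = m 0 + m (q - 3) * x ^ (q - 3) + m (q - 2) * x ^ (q - 2)"
proof -
  have "eval_coeffs (q - 1) m x = (\<Sum>i\<in>{0, q - 3, q - 2}. m i * x ^ i)"
    unfolding eval_coeffs_def
  proof (rule sum.mono_neutral_right)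
    show "\<forall>i\<in>{..<q - 1} - {0, q - 3, q - 2}. m i * x ^ i = 0"
    proof
      fix i
      assume "i \<in> {..<q - 1} - {0, q - 3, q - 2}"
      then have "i < q - 1" "i \<noteq> 0" "i \<noteq> q - 3" "i \<noteq> q - 2"
        by auto
      then have "1 \<le> i \<and> i < q - 3"
        by linarith
      then show "m i * x ^ i = 0"
        using assms by simp
    qed
  qed (use q_ge_4 in auto)
  also have "\<dots> = m 0 + m (q - 3) * x ^ (q - 3) + m (q - 2) * x ^ (q - 2)"
    using q_ge_4 by (simp add: add.assoc)
  finally show ?thesis .
qed

lemma square_times_eval_coeffs_middle_zero:
  fixes m :: "nat \<Rightarrow> 'a"
  assumes "\<forall>j. 1 \<le> j \<and> j < q - 3 \<longrightarrow> m j = 0" "x \<noteq> 0"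
  shows "x ^ 2 * eval_coeffs (q - 1) m x = m 0 * x ^ 2 + m (q - 2) * x + m (q - 3)"
proof -
  have "q - 1 = 2 + (q - 3)"
    using q_ge_4 by simp
  then have "x ^ 2 * x ^ (q - 3) = x ^ (q - 1)"
    by (simp only: power_add)
  also have "\<dots> = 1"
    using power_card_minus_1_eq_1[OF assms(2)] card_UNIV by simp
  finally have x_q3: "x ^ 2 * x ^ (q - 3) = 1" .
  have "q = 2 + (q - 2)"
    using q_ge_4 by simp
  then have "x ^ 2 * x ^ (q - 2) = x ^ q"
    by (metis power_add)
  also have "\<dots> = x"
    using power_card_eq_self[of x] card_UNIV by simp
  finally have x_q2: "x ^ 2 * x ^ (q - 2) = x" .
  have "x ^ 2 * eval_coeffs (q - 1) m x
      = m 0 * x ^ 2 + m (q - 3) * (x ^ 2 * x ^ (q - 3)) + m (q - 2) * (x ^ 2 * x ^ (q - 2))"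
    unfolding eval_coeffs_middle_zero[OF assms(1)] by (simp add: algebra_simps)
  then show ?thesis
    unfolding x_q3 x_q2 by (simp add: algebra_simps)
qed

lemma card_roots_middle_zero:
  fixes m :: "nat \<Rightarrow> 'a"
  assumes "\<forall>j. 1 \<le> j \<and> j < q - 3 \<longrightarrow> m j = 0"
  shows "card {x. eval_coeffs (q - 1) m x = 0} + of_bool (m (q - 3) = 0)
    = card {x. m 0 * x ^ 2 + m (q - 2) * x + m (q - 3) = 0} + of_bool (m 0 = 0)"
proof -
  let ?F = "{x. eval_coeffs (q - 1) m x = 0}"
    and ?Q = "{x. m 0 * x ^ 2 + m (q - 2) * x + m (q - 3) = 0}"
  have "x \<in> ?F \<longleftrightarrow> x \<in> ?Q" if "x \<noteq> 0" for x
    using square_times_eval_coeffs_middle_zero[OF assms that] that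
    by (metis (mono_tags, lifting) mem_Collect_eq mult_eq_0_iff zero_eq_power2)
  then have "?F - {0} = ?Q - {0}"
    by blast
  moreover have "eval_coeffs (q - 1) m 0 = m 0"
    using eval_coeffs_middle_zero[OF assms, of 0] q_ge_4 by (simp add: power_0_left)
  then have "0 \<in> ?F \<longleftrightarrow> m 0 = 0"
    by simp
  moreover have "0 \<in> ?Q \<longleftrightarrow> m (q - 3) = 0"
    by simp
  ultimately show ?thesis
    using card_eq_card_Diff_singleton_plus[of ?F 0] card_eq_card_Diff_singleton_plus[of ?Q 0]
    by simp
qed

lemma eq_0_if_subleading_zero_and_many_roots:
  fixes m :: "nat \<Rightarrow> 'a"
  assumes "CHAR('a) = 2" "m \<in> fvec (q - 1)" "m (q - 3) = 0"
    and "q - 2 \<le> card {x. eval_coeffs (q - 1) m x = 0}"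
  shows "m = (\<lambda>_. 0)"
proof -
  define f where "f = eval_coeffs (q - 1) m"
  let ?R = "{x. f x = 0}"
  txt \<open>Only the power sum of exponent \<open>q - 1\<close> is nonzero, so the moments of \<open>f\<close> of
    order 0 and 2 vanish; this rules out \<open>f\<close> being nonzero at exactly two points.\<close>
  have moment_0: "(\<Sum>x\<in>UNIV. x ^ 0 * f x) = 0"
    unfolding f_def sum_power_times_eval_coeffs
    using q_ge_4 by (intro sum.neutral) (simp add: sum_UNIV_power card_UNIV)
  have moment_2: "(\<Sum>x\<in>UNIV. x ^ 2 * f x) = 0"
    unfolding f_def sum_power_times_eval_coeffs
  proof (intro sum.neutral ballI)
    fix i
    assume "i \<in> {..<q - 1}"
    show "m i * (\<Sum>x::'a\<in>UNIV. x ^ (i + 2)) = 0"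
    proof (cases "i = q - 3")
      case False
      have "(\<Sum>x::'a\<in>UNIV. x ^ (i + 2)) = 0"
        by (subst sum_UNIV_power) (use False \<open>i \<in> {..<q - 1}\<close> q_ge_4 card_UNIV in auto)
      then show ?thesis
        by simp
    qed (simp add: assms(3))
  qed
  have "card (UNIV - ?R) \<le> 1"
  proof (rule ccontr)
    assume "\<not> card (UNIV - ?R) \<le> 1"
    moreover have "card (UNIV - ?R) \<le> 2"
      using assms(4) card_UNIV by (simp add: card_Diff_subset f_def)
    ultimately obtain u w where uw: "UNIV - ?R = {u, w}" "u \<noteq> w"
      by (metis card_2_iff le_antisym not_less_eq_eq numeral_2_eq_2 One_nat_def)
    have moment: "(\<Sum>x\<in>UNIV. x ^ j * f x) = u ^ j * f u + w ^ j * f w" for j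
    proof -
      have "(\<Sum>x\<in>UNIV. x ^ j * f x) = (\<Sum>x\<in>UNIV - ?R. x ^ j * f x)"
        by (rule sum.mono_neutral_right) auto
      then show ?thesis
        using uw by simp
    qed
    have "f w = f u"
      using moment_0 moment[of 0] uminus_CHAR_2[OF assms(1), of "f u"]
      by (simp add: add_eq_0_iff)
    then have "(u ^ 2 + w ^ 2) * f u = 0"
      using moment_2 moment[of 2] by (simp add: distrib_right)
    moreover have "u ^ 2 + w ^ 2 \<noteq> 0"
    proof -
      have "u ^ 2 - w ^ 2 \<noteq> 0"
        using power2_eq_iff_CHAR_2[OF assms(1), of u w] uw(2) by simp
      then show ?thesis
        by (simp only: minus_CHAR_2[OF assms(1)] not_False_eq_True)
    qed
    ultimately have "f u = 0"
      by simp
    then show False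
      using uw(1) by blast
  qed
  then have "q - 1 \<le> card ?R"
    using card_UNIV by (simp add: card_Diff_subset)
  moreover have "\<forall>i\<ge>q - 1. m i = 0"
    using assms(2) by (simp add: fvec_def)
  ultimately show ?thesis
    using coeffs_eq_0_if_card_roots_ge[of "q - 1" m "q - 1"] by (simp add: f_def)
qed

lemma eq_0_if_card_roots_plus_top_zeros:
  fixes m :: "nat \<Rightarrow> 'a"
  assumes "CHAR('a) = 2" "m \<in> fvec (q - 1)"
    and "q - 1 \<le> card {x. eval_coeffs (q - 1) m x = 0}
      + of_bool (m (q - 2) = 0) + of_bool (m (q - 3) = 0)"
  shows "m = (\<lambda>_. 0)"
proof -
  have top: "\<forall>i\<ge>q - 1. m i = 0"
    using assms(2) by (simp add: fvec_def)
  consider "m (q - 2) = 0" "m (q - 3) = 0" | "m (q - 2) = 0" "m (q - 3) \<noteq> 0"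
    | "m (q - 2) \<noteq> 0" "m (q - 3) = 0" | "m (q - 2) \<noteq> 0" "m (q - 3) \<noteq> 0"
    by blast
  then show ?thesis
  proof cases
    case 1
    have "\<forall>i\<ge>q - 3. m i = 0"
    proof (intro allI impI)
      fix i
      assume "q - 3 \<le> i"
      then have "i = q - 3 \<or> i = q - 2 \<or> q - 1 \<le> i"
        by linarith
      then show "m i = 0"
        using 1 top by blast
    qed
    then show ?thesis
      using coeffs_eq_0_if_card_roots_ge[of "q - 3" m "q - 1"] assms(3) 1 by simp
  next
    case 2
    have "\<forall>i\<ge>q - 2. m i = 0"
    proof (intro allI impI)
      fix i
      assume "q - 2 \<le> i"
      then have "i = q - 2 \<or> q - 1 \<le> i"
        by linarith
      then show "m i = 0"
        using 2 top by blast
    qed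
    then show ?thesis
      using coeffs_eq_0_if_card_roots_ge[of "q - 2" m "q - 1"] assms(3) 2 by simp
  next
    case 3
    then show ?thesis
      using eq_0_if_subleading_zero_and_many_roots[OF assms(1,2)] assms(3) by simp
  next
    case 4
    then show ?thesis
      using coeffs_eq_0_if_card_roots_ge[of "q - 1" m "q - 1"] assms(3) top by simp
  qed
qed

lemma ext_RS_OA_kernel:
  fixes m :: "nat \<Rightarrow> 'a"
  assumes "CHAR('a) = 2" "bij_betw e {0..<q} (UNIV :: 'a set)" "m \<in> fvec (q - 1)"
    and "S \<subseteq> {0..<q + 2}" "card S = q - 1" "\<forall>i\<in>S. ext_RS q e m i = 0"
  shows "m = (\<lambda>_. 0)"
  using eq_0_if_card_roots_plus_top_zeros[OF assms(1,3)] card_zero_cols_ext_RS[OF assms(2,4,6)] assms(5)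
  by simp

lemma ext_RS_AOA3_kernel:
  fixes m :: "nat \<Rightarrow> 'a"
  assumes "CHAR('a) = 2" "bij_betw e {0..<q} (UNIV :: 'a set)" "m \<in> fvec (q - 1)"
    and "S \<subseteq> {0..<q + 2}" "card S = 3" "\<forall>i\<in>S. ext_RS q e m i = 0"
    and "aug_col3 q m = (\<lambda>_. 0)"
  shows "m = (\<lambda>_. 0)"
proof -
  have middle: "\<forall>j. 1 \<le> j \<and> j < q - 3 \<longrightarrow> m j = 0"
    using assms(7) by (simp add: aug_col3_eq_0_iff)
  have "3 \<le> card {x. m 0 * x ^ 2 + m (q - 2) * x + m (q - 3) = 0}
      + of_bool (m 0 = 0) + of_bool (m (q - 2) = 0)"
    using card_zero_cols_ext_RS[OF assms(2,4,6)] card_roots_middle_zero[OF middle] assms(5)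
    by linarith
  then have "m (q - 2) = 0 \<and> m (q - 3) = 0 \<and> m 0 = 0"
    by (rule quadratic_eq_0_if_CHAR_2[OF assms(1)])
  then show ?thesis
    using eq_0_if_middle_and_ends_zero[OF assms(3) middle] by blast
qed

lemma ext_RS_AOA1_kernel:
  fixes m :: "nat \<Rightarrow> 'a"
  assumes "CHAR('a) = 2" "\<forall>y. y ^ 2 + y \<noteq> \<beta>" "bij_betw e {0..<q} (UNIV :: 'a set)"
    and "m \<in> fvec (q - 1)" "S \<subseteq> {0..<q + 2}" "card S = 1" "\<forall>i\<in>S. ext_RS q e m i = 0"
    and "aug_col1 q \<beta> m = (\<lambda>_. 0)"
  shows "m = (\<lambda>_. 0)"
proof -
  note middle = aug_col1_eq_0D(1)[OF q_ge_4 assms(8)]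
    and ends = aug_col1_eq_0D(2,3)[OF q_ge_4 assms(8)]
  define l where "l = m (q - 2)"
  have "l = 0"
  proof (rule ccontr)
    assume "l \<noteq> 0"
    have "\<beta> \<noteq> 0"
      using assms(2) by (metis add_0 zero_power2)
    have "1 \<le> card {x. eval_coeffs (q - 1) m x = 0}"
      using card_zero_cols_ext_RS[OF assms(3,5,7)] assms(6) ends \<open>l \<noteq> 0\<close> by (simp add: l_def)
    moreover have "m (q - 3) \<noteq> 0" "m 0 \<noteq> 0"
      using ends \<open>l \<noteq> 0\<close> \<open>\<beta> \<noteq> 0\<close> by (simp_all add: l_def)
    ultimately have "{x. m 0 * x ^ 2 + m (q - 2) * x + m (q - 3) = 0} \<noteq> {}"
      using card_roots_middle_zero[OF middle] by force
    then obtain x where "m 0 * x ^ 2 + m (q - 2) * x + m (q - 3) = 0"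
      by blast
    then have "l * (\<beta> * x ^ 2 + x + 1) = 0"
      using ends by (simp add: l_def algebra_simps)
    then have x: "\<beta> * x ^ 2 + x + 1 = 0"
      using \<open>l \<noteq> 0\<close> by simp
    then have "x \<noteq> 0"
      by auto
    have "(inverse x) ^ 2 * (\<beta> * x ^ 2 + x + 1) = \<beta> + (inverse x ^ 2 + inverse x)"
      using \<open>x \<noteq> 0\<close> by (simp add: field_simps power2_eq_square)
    then have "\<beta> + (inverse x ^ 2 + inverse x) = 0"
      using x by simp
    then have "\<beta> = - (inverse x ^ 2 + inverse x)"
      by (rule eq_neg_iff_add_eq_0[THEN iffD2])
    then have "\<beta> = inverse x ^ 2 + inverse x"
      by (simp only: uminus_CHAR_2[OF assms(1)])
    then show False
      using assms(2) by auto
  qed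
  then have "m 0 = 0" "m (q - 3) = 0" "m (q - 2) = 0"
    using ends by (simp_all add: l_def)
  then show ?thesis
    by (rule eq_0_if_middle_and_ends_zero[OF assms(4) middle])
qed

lemma ex_linear_AOA_1:
  fixes \<beta> :: 'a
  assumes "CHAR('a) = 2" "\<forall>y. y ^ 2 + y \<noteq> \<beta>" "bij_betw e {0..<q} (UNIV :: 'a set)"
  shows "\<exists>A :: ((nat \<Rightarrow> 'a) \<times> (nat \<Rightarrow> 'a)) list. linear_AOA 1 (q - 1) (q + 2) A"
proof (rule linear_AOA_generated[where G = "ext_RS q e" and E = "aug_col1 q \<beta>"])
  show "1 \<le> (1::nat)" "1 \<le> q - 1" "q - 1 \<le> q + 2"
    using q_ge_4 by auto
  show "aug_col1 q \<beta> m \<in> fvec (q - 1 - 1)" for m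
    by (rule aug_col1_fvec[OF q_ge_4])
qed (rule pointwise_linear_ext_RS pointwise_linear_aug_col1
    ext_RS_OA_kernel[OF assms(1,3)] ext_RS_AOA1_kernel[OF assms]; assumption)+

lemma ex_linear_AOA_3:
  assumes "CHAR('a) = 2" "bij_betw e {0..<q} (UNIV :: 'a set)"
  shows "\<exists>A :: ((nat \<Rightarrow> 'a) \<times> (nat \<Rightarrow> 'a)) list. linear_AOA 3 (q - 1) (q + 2) A"
proof (rule linear_AOA_generated[where G = "ext_RS q e" and E = "aug_col3 q"])
  show "1 \<le> (3::nat)" "3 \<le> q - 1" "q - 1 \<le> q + 2"
    using q_ge_4 by auto
qed (rule pointwise_linear_ext_RS pointwise_linear_aug_col3 aug_col3_fvec
    ext_RS_OA_kernel[OF assms] ext_RS_AOA3_kernel[OF assms]; assumption)+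

end

theorem theorem3p10:
  fixes q m :: nat
  assumes "card (UNIV :: 'a::{finite,field} set) = q"
    and "q = 2 ^ m"
    and "q \<ge> 4"
  shows "(\<exists>A :: ((nat \<Rightarrow> 'a) \<times> (nat \<Rightarrow> 'a)) list. linear_AOA 1 (q - 1) (q + 2) A) \<and>
         (\<exists>A :: ((nat \<Rightarrow> 'a) \<times> (nat \<Rightarrow> 'a)) list. linear_AOA 3 (q - 1) (q + 2) A)"
proof
  have CHAR_2: "CHAR('a) = 2"
    using CHAR_eq_2_if_card_power_of_2 assms(1,2) by blast
  obtain e :: "nat \<Rightarrow> 'a" where e: "bij_betw e {0..<q} UNIV"
    using ex_bij_betw_nat_finite[of "UNIV :: 'a set"] assms(1) by auto
  obtain \<beta> :: 'a where \<beta>: "\<forall>y. y ^ 2 + y \<noteq> \<beta>"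
    using ex_not_square_plus_self by blast
  show "\<exists>A :: ((nat \<Rightarrow> 'a) \<times> (nat \<Rightarrow> 'a)) list. linear_AOA 1 (q - 1) (q + 2) A"
    by (rule ex_linear_AOA_1[OF assms(1,3) CHAR_2 \<beta> e])
  show "\<exists>A :: ((nat \<Rightarrow> 'a) \<times> (nat \<Rightarrow> 'a)) list. linear_AOA 3 (q - 1) (q + 2) A"
    by (rule ex_linear_AOA_3[OF assms(1,3) CHAR_2 e])
qed

end
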